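(* Let $M>1$, $\tau>0$, $\kappa\in(0,1)$, $T>0$. Let $p\in C^2(\mathbb{R})$ with $p(x)\in(p_{min},1]$ for all $x$ (some $p_{min}\ge0$), and $0\le p'(x)\le c_p(1-p(x))$, $|p''(x)|\le c_p(1-p(x))$ for all $x$, for some $c_p>0$. Let $f_0\ge0$ with $\int_{\mathbb{R}}f_0\,dx=1$, $\int_{\mathbb{R}}pf_0^2\,dx<\infty$, and let $f\ge0$ be a sufficiently regular function on $\mathbb{R}\times[0,T]$ (smooth, with $f,\partial_xf$ decaying as $|x|\to\infty$ so that integrations by parts produce no boundary terms) with $f(\cdot,0)=f_0$ solving \[ \partial_tf+\frac{M-1}{\sqrt\tau}a(t)\partial_x(pf)-\frac{(M-1)^2}{2}\Big(a^2(t)+\frac{1}{M-1}b(t)\Big)\partial^2_{xx}(pf)=0, \] with $a(t)=\int(\kappa-p)f\,dx$, $b(t)=\int pf\,dx\int(1-p)f\,dx$. Set $\alpha(t)=\int_{\mathbb{R}}p f\,dx$ and $\beta(t)=\int_{\mathbb{R}}(1-p)pf\,dx$. Then there is $c_0$ depending only on $c_p$, $\tau$ and $M$ such that \[ |\alpha'(t)|\le c_0\beta(t),\qquad |\beta'(t)|\le c_0\beta(t),\qquad t>0, \] and in particular $\beta(t)\ge\beta(0)e^{-c_0t}$ for $t>0$. *)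

theory Defs
  imports "HOL-Analysis.Analysis"
begin

definition admissible_p ::
  "real \<Rightarrow> real \<Rightarrow> (real \<Rightarrow> real) \<Rightarrow> (real \<Rightarrow> real) \<Rightarrow> (real \<Rightarrow> real) \<Rightarrow> bool" where
  "admissible_p cp pmin p p1 p2 \<longleftrightarrow>
     pmin \<ge> 0 \<and>
     (\<forall>x. (p has_real_derivative p1 x) (at x)) \<and>
     (\<forall>x. (p1 has_real_derivative p2 x) (at x)) \<and>
     continuous_on UNIV p2 \<and>
     (\<forall>x. pmin < p x \<and> p x \<le> 1) \<and>
     (\<forall>x. 0 \<le> p1 x \<and> p1 x \<le> cp * (1 - p x) \<and> \<bar>p2 x\<bar> \<le> cp * (1 - p x))"

definition admissible_f0 :: "(real \<Rightarrow> real) \<Rightarrow> (real \<Rightarrow> real) \<Rightarrow> bool" where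
  "admissible_f0 p f0 \<longleftrightarrow>
     (\<forall>x. 0 \<le> f0 x) \<and> integrable lborel f0 \<and> (LINT x|lborel. f0 x) = 1 \<and>
     integrable lborel (\<lambda>x. p x * (f0 x)\<^sup>2)"

text \<open>Regularity of f = f(x,t) on R x [0,T]: ft, fx, fxx are the partial derivatives
  (time derivative one-sided at the endpoints), all of them integrable in x for every t,
  the time derivative is locally (in t) dominated by an integrable function of x
  (so that one may differentiate under the integral sign), and f, f_x vanish
  as |x| \<rightarrow> \<infinity> (no boundary terms in integrations by parts).\<close>
definition regular_sol ::
  "real \<Rightarrow> (real \<Rightarrow> real \<Rightarrow> real) \<Rightarrow> (real \<Rightarrow> real \<Rightarrow> real) \<Rightarrow> (real \<Rightarrow> real \<Rightarrow> real)
     \<Rightarrow> (real \<Rightarrow> real \<Rightarrow> real) \<Rightarrow> bool" where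
  "regular_sol T f ft fx fxx \<longleftrightarrow>
     (\<forall>t\<in>{0..T}. \<forall>x.
        ((\<lambda>s. f x s) has_real_derivative ft x t) (at t within {0..T}) \<and>
        ((\<lambda>y. f y t) has_real_derivative fx x t) (at x) \<and>
        ((\<lambda>y. fx y t) has_real_derivative fxx x t) (at x)) \<and>
     (\<forall>t\<in>{0..T}.
        integrable lborel (\<lambda>x. f x t) \<and> integrable lborel (\<lambda>x. ft x t) \<and>
        integrable lborel (\<lambda>x. fx x t) \<and> integrable lborel (\<lambda>x. fxx x t)) \<and>
     (\<forall>t0\<in>{0..T}. \<exists>e>0. \<exists>g. integrable lborel g \<and>
        (\<forall>x. \<forall>s\<in>{0..T}. \<bar>s - t0\<bar> < e \<longrightarrow> \<bar>ft x s\<bar> \<le> g x)) \<and>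
     (\<forall>t\<in>{0..T}.
        ((\<lambda>x. f x t) \<longlongrightarrow> 0) at_top \<and> ((\<lambda>x. f x t) \<longlongrightarrow> 0) at_bot \<and>
        ((\<lambda>x. fx x t) \<longlongrightarrow> 0) at_top \<and> ((\<lambda>x. fx x t) \<longlongrightarrow> 0) at_bot)"

definition coef_a :: "real \<Rightarrow> (real \<Rightarrow> real) \<Rightarrow> (real \<Rightarrow> real \<Rightarrow> real) \<Rightarrow> real \<Rightarrow> real" where
  "coef_a \<kappa> p f t = (LINT x|lborel. (\<kappa> - p x) * f x t)"

definition coef_b :: "(real \<Rightarrow> real) \<Rightarrow> (real \<Rightarrow> real \<Rightarrow> real) \<Rightarrow> real \<Rightarrow> real" where
  "coef_b p f t = (LINT x|lborel. p x * f x t) * (LINT x|lborel. (1 - p x) * f x t)"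

text \<open>The PDE
  d_t f + (M-1)/sqrt tau * a(t) d_x(p f) - (M-1)^2/2 (a(t)^2 + b(t)/(M-1)) d_xx(p f) = 0
  on R x [0,T], with d_x(p f) = p' f + p f_x and d_xx(p f) = p'' f + 2 p' f_x + p f_xx.\<close>
definition solves_pde ::
  "real \<Rightarrow> real \<Rightarrow> real \<Rightarrow> real \<Rightarrow> (real \<Rightarrow> real) \<Rightarrow> (real \<Rightarrow> real) \<Rightarrow> (real \<Rightarrow> real)
     \<Rightarrow> (real \<Rightarrow> real \<Rightarrow> real) \<Rightarrow> (real \<Rightarrow> real \<Rightarrow> real) \<Rightarrow> (real \<Rightarrow> real \<Rightarrow> real)
     \<Rightarrow> (real \<Rightarrow> real \<Rightarrow> real) \<Rightarrow> bool" where
  "solves_pde M \<tau> \<kappa> T p p1 p2 f ft fx fxx \<longleftrightarrow>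
     (\<forall>t\<in>{0..T}. \<forall>x.
        ft x t
        + (M - 1) / sqrt \<tau> * coef_a \<kappa> p f t * (p1 x * f x t + p x * fx x t)
        - (M - 1)\<^sup>2 / 2 * ((coef_a \<kappa> p f t)\<^sup>2 + coef_b p f t / (M - 1))
            * (p2 x * f x t + 2 * p1 x * fx x t + p x * fxx x t) = 0)"

end

theory Submission
  imports Defs
begin

(*
  Testing the equation against a bounded C^2 function phi and integrating by parts twice
  (the decay of f and f_x at infinity kills the boundary terms) gives
    d/dt int phi f = A(t) int phi' p f + D(t) int phi'' p f,
  where A = (M-1)/sqrt tau a(t) and D = (M-1)^2/2 (a(t)^2 + b(t)/(M-1)).
  For phi = 1 this shows that the mass int f stays 1, hence |a| <= 1 and 0 <= b <= 1, so
  |A| and D are bounded in terms of M and tau alone. For phi = p and phi = (1-p) p the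
  hypotheses on p' and p'' give |phi'|, |phi''| <= (c_p + 2 c_p^2)(1 - p), so the derivatives
  of alpha and beta are bounded by a constant c0 times beta = int (1-p) p f. Finally
  beta(t) exp(c0 t) is nondecreasing.
*)

lemma mult_cont: "f \<in> bcontfun \<Longrightarrow> g \<in> bcontfun \<Longrightarrow> (\<lambda>x. f x * g x) \<in> bcontfun"
  for f g :: "'a::topological_space \<Rightarrow> 'b::real_normed_algebra"
proof -
  assume "f \<in> bcontfun" "g \<in> bcontfun"
  then obtain A B where "continuous_on UNIV f" "continuous_on UNIV g"
    "\<And>x. norm (f x) \<le> A" "\<And>x. norm (g x) \<le> B"
    unfolding bcontfun_def bounded_iff by blast
  moreover have "norm (f x * g x) \<le> A * B" for x
    using norm_mult_ineq[of "f x" "g x"] mult_mono'[OF \<open>norm (f x) \<le> A\<close> \<open>norm (g x) \<le> B\<close>]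
    by simp
  ultimately show ?thesis
    by (intro bcontfun_normI continuous_intros)
qed

lemma bcontfun_bound:
  fixes g :: "'a::topological_space \<Rightarrow> real"
  assumes "g \<in> bcontfun"
  obtains B where "\<And>x. \<bar>g x\<bar> \<le> B"
  using assms unfolding bcontfun_def bounded_iff by auto

lemma integrable_bcontfun_mult:
  fixes g f :: "real \<Rightarrow> real"
  assumes "g \<in> bcontfun" "integrable lborel f"
  shows "integrable lborel (\<lambda>x. g x * f x)"
proof -
  obtain B where B: "\<And>x. \<bar>g x\<bar> \<le> B" using bcontfun_bound[OF assms(1)] by blast
  show ?thesis
  proof (rule Bochner_Integration.integrable_bound)
    show "integrable lborel (\<lambda>x. B * \<bar>f x\<bar>)" using assms(2) by simp
    have "g \<in> borel_measurable borel"
      using assms(1) by (intro borel_measurable_continuous_onI) (simp add: bcontfun_def)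
    then show "(\<lambda>x. g x * f x) \<in> borel_measurable lborel" using assms(2) by measurable
    show "AE x in lborel. norm (g x * f x) \<le> norm (B * \<bar>f x\<bar>)"
    proof (intro AE_I2)
      fix x
      have "\<bar>g x\<bar> * \<bar>f x\<bar> \<le> B * \<bar>f x\<bar>" using B[of x] by (intro mult_right_mono) auto
      moreover have "0 \<le> B" using B[of x] by linarith
      ultimately show "norm (g x * f x) \<le> norm (B * \<bar>f x\<bar>)" by (simp add: abs_mult)
    qed
  qed
qed

lemma tendsto_bcontfun_mult_zero:
  fixes g h :: "'a::topological_space \<Rightarrow> real"
  assumes "g \<in> bcontfun" and "(h \<longlongrightarrow> 0) F"
  shows "((\<lambda>x. g x * h x) \<longlongrightarrow> 0) F"
proof -
  obtain B where B: "\<And>x. \<bar>g x\<bar> \<le> B" using bcontfun_bound[OF assms(1)] by blast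
  show ?thesis
  proof (rule Lim_null_comparison)
    show "\<forall>\<^sub>F x in F. norm (g x * h x) \<le> B * \<bar>h x\<bar>"
      using B by (intro always_eventually allI) (simp add: abs_mult mult_right_mono)
    show "((\<lambda>x. B * \<bar>h x\<bar>) \<longlongrightarrow> 0) F"
      using tendsto_mult_right_zero[OF tendsto_rabs_zero[OF assms(2)]] by simp
  qed
qed

lemma integral_deriv_eq_0_vanishing_at_infinity:
  fixes G G' :: "real \<Rightarrow> real"
  assumes G: "\<And>x. (G has_real_derivative G' x) (at x)" and "integrable lborel G'"
    and top: "(G \<longlongrightarrow> 0) at_top" and bot: "(G \<longlongrightarrow> 0) at_bot"
  shows "(LINT x|lborel. G' x) = 0"
proof -
  let ?I = "\<lambda>n::nat. {- real n..real n}"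
  have FTC: "(LINT x|lborel. indicator (?I n) x * G' x) = G (real n) - G (- real n)" for n
  proof -
    have "set_integrable lborel (?I n) G'"
      unfolding set_integrable_def by (intro integrable_mult_indicator assms(2)) auto
    then have "(LINT x : ?I n | lborel. G' x) = integral (?I n) G'"
      by (rule set_borel_integral_eq_integral(2))
    also have "\<dots> = G (real n) - G (- real n)"
      by (intro integral_unique fundamental_theorem_of_calculus)
         (auto intro: has_field_derivative_imp_has_derivative DERIV_subset[OF G]
               simp flip: has_real_derivative_iff_has_vector_derivative)
    finally show ?thesis
      unfolding set_lebesgue_integral_def by simp
  qed
  have "(\<lambda>n. LINT x|lborel. indicator (?I n) x * G' x) \<longlonglongrightarrow> (LINT x|lborel. G' x)"
  proof (rule integral_dominated_convergence[where w="\<lambda>x. \<bar>G' x\<bar>"])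
    show "AE x in lborel. (\<lambda>n. indicator (?I n) x * G' x) \<longlonglongrightarrow> G' x"
    proof (intro AE_I2 tendsto_eventually)
      fix x :: real
      obtain N :: nat where "\<bar>x\<bar> \<le> real N" using real_arch_simple by blast
      then show "\<forall>\<^sub>F n in sequentially. indicator (?I n) x * G' x = G' x"
        unfolding eventually_sequentially by (intro exI[of _ N]) (auto simp: indicator_def)
    qed
  qed (use assms(2) in \<open>auto simp: indicator_def\<close>)
  moreover have "(\<lambda>n. G (real n) - G (- real n)) \<longlonglongrightarrow> 0 - 0"
    by (intro tendsto_diff filterlim_compose[OF top filterlim_real_sequentially]
          filterlim_compose[OF bot filterlim_compose[OF filterlim_uminus_at_bot_at_top
            filterlim_real_sequentially]])
  ultimately show ?thesis
    unfolding FTC by (simp add: LIMSEQ_unique)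
qed

lemma integral_by_parts_vanishing_at_infinity:
  fixes u u' v v' :: "real \<Rightarrow> real"
  assumes "\<And>x. (u has_real_derivative u' x) (at x)" "\<And>x. (v has_real_derivative v' x) (at x)"
    and "integrable lborel (\<lambda>x. u x * v' x)" "integrable lborel (\<lambda>x. u' x * v x)"
    and "((\<lambda>x. u x * v x) \<longlongrightarrow> 0) at_top" "((\<lambda>x. u x * v x) \<longlongrightarrow> 0) at_bot"
  shows "(LINT x|lborel. u x * v' x) = - (LINT x|lborel. u' x * v x)"
proof -
  have "(LINT x|lborel. u' x * v x + u x * v' x) = 0"
    by (rule integral_deriv_eq_0_vanishing_at_infinity)
       (use assms in \<open>auto intro!: derivative_eq_intros\<close>)
  then show ?thesis using assms(3,4) by simp
qed

lemma tendsto_integral_dominated_at_within: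
  fixes q :: "real \<Rightarrow> 'a \<Rightarrow> real"
  assumes "\<And>s. s \<in> S \<Longrightarrow> q s \<in> borel_measurable M" "l \<in> borel_measurable M" "integrable M w"
    and "\<And>x. ((\<lambda>s. q s x) \<longlongrightarrow> l x) (at t0 within S)"
    and bound: "\<forall>\<^sub>F s in at t0 within S. \<forall>x. \<bar>q s x\<bar> \<le> w x"
  shows "((\<lambda>s. integral\<^sup>L M (q s)) \<longlongrightarrow> integral\<^sup>L M l) (at t0 within S)"
proof (subst tendsto_at_iff_sequentially, intro allI impI)
  fix X :: "nat \<Rightarrow> real"
  assume X: "\<forall>i. X i \<in> S - {t0}" "X \<longlonglongrightarrow> t0"
  then have "filterlim X (at t0 within S) sequentially"
    by (auto simp: filterlim_at)
  from filterlim_iff[THEN iffD1, OF this, rule_format, OF bound]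
  obtain N where N: "\<And>n x. n \<ge> N \<Longrightarrow> \<bar>q (X n) x\<bar> \<le> w x"
    by (auto simp: eventually_sequentially)
  have "(\<lambda>n. integral\<^sup>L M (q (X (n + N)))) \<longlonglongrightarrow> integral\<^sup>L M l"
  proof (rule integral_dominated_convergence[where w = w])
    show "AE x in M. (\<lambda>n. q (X (n + N)) x) \<longlonglongrightarrow> l x"
    proof (intro AE_I2)
      fix x
      have "((\<lambda>s. q s x) \<circ> (\<lambda>n. X (n + N))) \<longlonglongrightarrow> l x"
        using assms(4)[of x] X LIMSEQ_ignore_initial_segment[OF X(2), of N]
        by (auto simp: tendsto_at_iff_sequentially)
      then show "(\<lambda>n. q (X (n + N)) x) \<longlonglongrightarrow> l x" by (simp add: o_def)
    qed
  qed (use assms(1-3) X N in auto)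
  then show "((\<lambda>s. integral\<^sup>L M (q s)) \<circ> X) \<longlonglongrightarrow> integral\<^sup>L M l"
    unfolding o_def by (rule LIMSEQ_offset)
qed

lemma has_real_derivative_integral_dominated:
  fixes u ut :: "'a \<Rightarrow> real \<Rightarrow> real"
  assumes "convex S" "t0 \<in> S"
    and deriv: "\<And>x s. s \<in> S \<Longrightarrow> ((\<lambda>s. u x s) has_real_derivative ut x s) (at s within S)"
    and int: "\<And>s. s \<in> S \<Longrightarrow> integrable M (\<lambda>x. u x s)" and "integrable M (\<lambda>x. ut x t0)"
    and "e > 0" "integrable M g"
    and bound: "\<And>x s. s \<in> S \<Longrightarrow> \<bar>s - t0\<bar> < e \<Longrightarrow> \<bar>ut x s\<bar> \<le> g x"
  shows "((\<lambda>s. LINT x|M. u x s) has_real_derivative (LINT x|M. ut x t0)) (at t0 within S)"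
proof -
  define q where "q s x = (u x s - u x t0) / (s - t0)" for s x
  have Lipschitz: "\<bar>u x s - u x t0\<bar> \<le> g x * \<bar>s - t0\<bar>" if "s \<in> S" "\<bar>s - t0\<bar> < e" for x s
    using field_differentiable_bound[where S = "S \<inter> ball t0 e" and f = "\<lambda>s. u x s"
        and f' = "\<lambda>s. ut x s" and B = "g x" and x = s and y = t0]
      that assms(1,2,6) deriv bound
    by (auto intro: DERIV_subset simp: convex_Int dist_real_def abs_minus_commute)
  have lim: "((\<lambda>s. LINT x|M. q s x) \<longlongrightarrow> (LINT x|M. ut x t0)) (at t0 within S)"
  proof (rule tendsto_integral_dominated_at_within[where w = g])
    show "((\<lambda>s. q s x) \<longlongrightarrow> ut x t0) (at t0 within S)" for x
      using deriv[OF assms(2), of x] unfolding q_def has_field_derivative_iff .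
    have "\<forall>\<^sub>F s in at t0 within S. s \<in> S \<and> s \<noteq> t0 \<and> \<bar>s - t0\<bar> < e"
      using \<open>e > 0\<close> by (auto simp: eventually_at dist_real_def)
    then show "\<forall>\<^sub>F s in at t0 within S. \<forall>x. \<bar>q s x\<bar> \<le> g x"
      by eventually_elim (use Lipschitz in \<open>auto simp: q_def abs_divide divide_le_eq\<close>)
  qed (use assms(2,5,7) int in \<open>auto simp: q_def\<close>)
  have "\<forall>\<^sub>F s in at t0 within S.
          (LINT x|M. q s x) = ((LINT x|M. u x s) - (LINT x|M. u x t0)) / (s - t0)"
    unfolding eventually_at_filter q_def using int assms(2) by simp
  with lim show ?thesis
    unfolding has_field_derivative_iff by (simp add: tendsto_cong)
qed

lemma exp_lower_bound_if_deriv_ge: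
  fixes \<beta> \<beta>' :: "real \<Rightarrow> real"
  assumes "a \<le> b" "continuous_on {a..b} \<beta>"
    and deriv: "\<And>s. a < s \<Longrightarrow> s < b \<Longrightarrow> (\<beta> has_real_derivative \<beta>' s) (at s)"
    and ge: "\<And>s. a < s \<Longrightarrow> s < b \<Longrightarrow> - c * \<beta> s \<le> \<beta>' s"
  shows "\<beta> a * exp (- c * (b - a)) \<le> \<beta> b"
proof -
  have "\<beta> a * exp (c * a) \<le> \<beta> b * exp (c * b)"
  proof (rule DERIV_nonneg_imp_increasing_open[OF \<open>a \<le> b\<close>])
    fix s assume s: "a < s" "s < b"
    have "((\<lambda>s. \<beta> s * exp (c * s)) has_real_derivative (\<beta>' s + c * \<beta> s) * exp (c * s)) (at s)"
      by (rule derivative_eq_intros deriv[OF s] refl | simp add: algebra_simps)+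
    moreover have "0 \<le> (\<beta>' s + c * \<beta> s) * exp (c * s)"
      using ge[OF s] by simp
    ultimately show "\<exists>y. ((\<lambda>s. \<beta> s * exp (c * s)) has_real_derivative y) (at s) \<and> 0 \<le> y"
      by blast
  qed (use assms(2) in \<open>auto intro!: continuous_intros\<close>)
  then have "\<beta> a * exp (c * a) * exp (- c * b) \<le> \<beta> b * exp (c * b) * exp (- c * b)"
    by (rule mult_right_mono) simp
  then show ?thesis
    by (simp add: mult.assoc algebra_simps flip: exp_add)
qed

lemma derivative_bounds_one_minus_p_times_p:
  fixes P P1 P2 c :: real
  assumes "0 \<le> P" "P \<le> 1" "\<bar>P1\<bar> \<le> c * (1 - P)" "\<bar>P2\<bar> \<le> c * (1 - P)"
  shows "\<bar>P1 * (1 - 2 * P)\<bar> \<le> (c + 2 * c\<^sup>2) * (1 - P)"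
    and "\<bar>P2 * (1 - 2 * P) - 2 * P1\<^sup>2\<bar> \<le> (c + 2 * c\<^sup>2) * (1 - P)"
proof -
  have factor: "\<bar>Q * (1 - 2 * P)\<bar> \<le> \<bar>Q\<bar>" for Q
    using assms(1,2) by (simp add: abs_mult mult_left_le)
  have "P1\<^sup>2 \<le> (c * (1 - P))\<^sup>2"
    using power_mono[OF assms(3) abs_ge_zero, of 2] by simp
  also have "\<dots> = c\<^sup>2 * (1 - P) * (1 - P)" by (simp add: power2_eq_square)
  also have "\<dots> \<le> c\<^sup>2 * (1 - P)" using assms(1,2) by (simp add: mult_left_le)
  finally have square: "P1\<^sup>2 \<le> c\<^sup>2 * (1 - P)" .
  have "0 \<le> c\<^sup>2 * (1 - P)" using assms(2) by simp
  then show "\<bar>P1 * (1 - 2 * P)\<bar> \<le> (c + 2 * c\<^sup>2) * (1 - P)"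
    using factor[of P1] assms(3) by (simp add: algebra_simps)
  have "\<bar>P2 * (1 - 2 * P) - 2 * P1\<^sup>2\<bar> \<le> \<bar>P2 * (1 - 2 * P)\<bar> + 2 * P1\<^sup>2"
    using abs_triangle_ineq4[of "P2 * (1 - 2 * P)" "2 * P1\<^sup>2"] by simp
  also have "\<dots> \<le> c * (1 - P) + 2 * (c\<^sup>2 * (1 - P))"
    using factor[of P2] assms(4) square by linarith
  finally show "\<bar>P2 * (1 - 2 * P) - 2 * P1\<^sup>2\<bar> \<le> (c + 2 * c\<^sup>2) * (1 - P)"
    by (simp add: algebra_simps)
qed

lemma differentiable_deriv_bound_interior:
  fixes g B :: "real \<Rightarrow> real"
  assumes "\<And>s. s \<in> {a..b} \<Longrightarrow> \<exists>V. (g has_real_derivative V) (at s within {a..b}) \<and> \<bar>V\<bar> \<le> B s"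
    and "t \<in> {a<..<b}"
  shows "g differentiable (at t) \<and> \<bar>deriv g t\<bar> \<le> B t"
proof -
  have "t \<in> {a..b}" using assms(2) by simp
  with assms(1) obtain V where "(g has_real_derivative V) (at t within {a..b})" "\<bar>V\<bar> \<le> B t"
    by blast
  moreover from this(1) have "(g has_real_derivative V) (at t)"
    using assms(2) at_within_Icc_at[of a t b] by simp
  ultimately show ?thesis
    using DERIV_imp_deriv real_differentiable_def by blast
qed

definition decay_rate :: "real \<Rightarrow> real \<Rightarrow> real \<Rightarrow> real" where
  "decay_rate M \<tau> cp = ((M - 1) / sqrt \<tau> + M * (M - 1) / 2) * (cp + 2 * cp\<^sup>2)"

locale pde_solution =
  fixes M \<tau> \<kappa> T cp pmin :: real and p p1 p2 :: "real \<Rightarrow> real"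
    and f ft fx fxx :: "real \<Rightarrow> real \<Rightarrow> real"
  assumes M: "M > 1" and \<tau>: "\<tau> > 0" and cp: "cp > 0" and \<kappa>: "0 < \<kappa>" "\<kappa> < 1" and T: "0 \<le> T"
    and admissible_p: "admissible_p cp pmin p p1 p2"
    and regular_sol: "regular_sol T f ft fx fxx"
    and solves_pde: "solves_pde M \<tau> \<kappa> T p p1 p2 f ft fx fxx"
    and f_nonneg: "\<And>t x. t \<in> {0..T} \<Longrightarrow> 0 \<le> f x t"
    and initial_mass: "(LINT x|lborel. f x 0) = 1"
begin

definition moment :: "(real \<Rightarrow> real) \<Rightarrow> real \<Rightarrow> real" where
  "moment \<phi> t = (LINT x|lborel. \<phi> x * f x t)"

definition drift :: "real \<Rightarrow> real" where
  "drift t = (M - 1) / sqrt \<tau> * coef_a \<kappa> p f t"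

definition diffusion :: "real \<Rightarrow> real" where
  "diffusion t = (M - 1)\<^sup>2 / 2 * ((coef_a \<kappa> p f t)\<^sup>2 + coef_b p f t / (M - 1))"

lemma p_bounds: "0 < p x" "p x \<le> 1" "0 \<le> p1 x" "p1 x \<le> cp * (1 - p x)" "\<bar>p2 x\<bar> \<le> cp * (1 - p x)"
  using admissible_p unfolding admissible_p_def by (auto intro: le_less_trans)

lemma p_has_real_derivative:
  "(p has_real_derivative p1 x) (at x)" "(p1 has_real_derivative p2 x) (at x)"
  using admissible_p unfolding admissible_p_def by auto

lemma p_bcontfun: "p \<in> bcontfun" "p1 \<in> bcontfun" "p2 \<in> bcontfun"
proof -
  have "\<bar>p x\<bar> \<le> 1" "\<bar>p1 x\<bar> \<le> cp" "\<bar>p2 x\<bar> \<le> cp" for x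
  proof -
    have "cp * (1 - p x) \<le> cp" using p_bounds[of x] cp by (simp add: mult_left_le)
    then show "\<bar>p x\<bar> \<le> 1" "\<bar>p1 x\<bar> \<le> cp" "\<bar>p2 x\<bar> \<le> cp" using p_bounds[of x] by auto
  qed
  moreover have "continuous_on UNIV p" "continuous_on UNIV p1" "continuous_on UNIV p2"
    using admissible_p p_has_real_derivative
    by (auto simp: admissible_p_def intro!: continuous_at_imp_continuous_on DERIV_isCont)
  ultimately show "p \<in> bcontfun" "p1 \<in> bcontfun" "p2 \<in> bcontfun"
    by (metis bcontfun_normI real_norm_def)+
qed

lemma f_has_space_derivatives:
  assumes "t \<in> {0..T}"
  shows "((\<lambda>y. f y t) has_real_derivative fx x t) (at x)"
    and "((\<lambda>y. fx y t) has_real_derivative fxx x t) (at x)"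
  using regular_sol assms unfolding regular_sol_def by auto

lemma integrable_f:
  assumes "t \<in> {0..T}"
  shows "integrable lborel (\<lambda>x. f x t)" "integrable lborel (\<lambda>x. ft x t)"
    and "integrable lborel (\<lambda>x. fx x t)" "integrable lborel (\<lambda>x. fxx x t)"
  using regular_sol assms unfolding regular_sol_def by auto

lemma f_vanishing_at_infinity:
  assumes "t \<in> {0..T}"
  shows "((\<lambda>x. f x t) \<longlongrightarrow> 0) at_top" "((\<lambda>x. f x t) \<longlongrightarrow> 0) at_bot"
    and "((\<lambda>x. fx x t) \<longlongrightarrow> 0) at_top" "((\<lambda>x. fx x t) \<longlongrightarrow> 0) at_bot"
  using regular_sol assms unfolding regular_sol_def by auto

lemma integrable_moment: "t \<in> {0..T} \<Longrightarrow> \<phi> \<in> bcontfun \<Longrightarrow> integrable lborel (\<lambda>x. \<phi> x * f x t)"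
  by (rule integrable_bcontfun_mult[OF _ integrable_f(1)])

lemma moment_has_derivative_integral_ft:
  assumes "\<phi> \<in> bcontfun" "t \<in> {0..T}"
  shows "(moment \<phi> has_real_derivative (LINT x|lborel. \<phi> x * ft x t)) (at t within {0..T})"
proof -
  obtain e g where "e > 0" "integrable lborel g"
    and dominated: "\<And>x s. s \<in> {0..T} \<Longrightarrow> \<bar>s - t\<bar> < e \<Longrightarrow> \<bar>ft x s\<bar> \<le> g x"
    using regular_sol assms(2) unfolding regular_sol_def by fastforce
  obtain B where B: "\<And>x. \<bar>\<phi> x\<bar> \<le> B" using bcontfun_bound[OF assms(1)] by blast
  show ?thesis
    unfolding moment_def
  proof (rule has_real_derivative_integral_dominated[where e = e and g = "\<lambda>x. B * g x"])
    show "((\<lambda>s. \<phi> x * f x s) has_real_derivative \<phi> x * ft x s) (at s within {0..T})"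
      if "s \<in> {0..T}" for x s
      using regular_sol that unfolding regular_sol_def by (auto intro: DERIV_cmult)
    show "\<bar>\<phi> x * ft x s\<bar> \<le> B * g x" if "s \<in> {0..T}" "\<bar>s - t\<bar> < e" for x s
      using dominated[OF that, of x] B[of x] by (simp add: abs_mult mult_mono')
    show "integrable lborel (\<lambda>x. \<phi> x * ft x t)"
      by (rule integrable_bcontfun_mult[OF assms(1) integrable_f(2)[OF assms(2)]])
  qed (use assms \<open>e > 0\<close> \<open>integrable lborel g\<close> integrable_moment in auto)
qed

definition dx_pf :: "real \<Rightarrow> real \<Rightarrow> real" where
  "dx_pf t x = p1 x * f x t + p x * fx x t"

definition dxx_pf :: "real \<Rightarrow> real \<Rightarrow> real" where
  "dxx_pf t x = p2 x * f x t + 2 * p1 x * fx x t + p x * fxx x t"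

lemma ft_eq:
  assumes "t \<in> {0..T}"
  shows "ft x t = - drift t * dx_pf t x + diffusion t * dxx_pf t x"
proof -
  have "ft x t + drift t * dx_pf t x - diffusion t * dxx_pf t x = 0"
    using solves_pde assms unfolding solves_pde_def drift_def diffusion_def dx_pf_def dxx_pf_def
    by auto
  then show ?thesis by linarith
qed

lemma integrable_dx_pf:
  assumes "t \<in> {0..T}"
  shows "integrable lborel (dx_pf t)" "integrable lborel (dxx_pf t)"
proof -
  note f = integrable_f[OF assms]
  show "integrable lborel (dx_pf t)"
    unfolding dx_pf_def[abs_def]
    by (intro Bochner_Integration.integrable_add integrable_bcontfun_mult[OF p_bcontfun(2) f(1)]
        integrable_bcontfun_mult[OF p_bcontfun(1) f(3)])
  show "integrable lborel (dxx_pf t)"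
    unfolding dxx_pf_def[abs_def]
    by (intro Bochner_Integration.integrable_add integrable_bcontfun_mult[OF p_bcontfun(3) f(1)]
        integrable_bcontfun_mult[OF mult_cont[OF const_bcontfun p_bcontfun(2)] f(3)]
        integrable_bcontfun_mult[OF p_bcontfun(1) f(4)])
qed

lemma bcontfun_mult_p: "a \<in> bcontfun \<Longrightarrow> (\<lambda>x. a x * p x) \<in> bcontfun"
  and bcontfun_mult_p1: "a \<in> bcontfun \<Longrightarrow> (\<lambda>x. a x * p1 x) \<in> bcontfun"
  by (intro mult_cont p_bcontfun; assumption)+

lemma integral_mult_dx_pf:
  assumes "\<And>x. (a has_real_derivative a' x) (at x)" "a \<in> bcontfun" "a' \<in> bcontfun" "t \<in> {0..T}"
  shows "(LINT x|lborel. a x * dx_pf t x) = - moment (\<lambda>x. a' x * p x) t"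
proof -
  have "(LINT x|lborel. a x * dx_pf t x) = - (LINT x|lborel. a' x * (p x * f x t))"
  proof (rule integral_by_parts_vanishing_at_infinity[OF assms(1)])
    show "((\<lambda>x. p x * f x t) has_real_derivative dx_pf t x) (at x)" for x
      unfolding dx_pf_def
      by (auto intro!: derivative_eq_intros p_has_real_derivative f_has_space_derivatives assms(4))
    show "integrable lborel (\<lambda>x. a x * dx_pf t x)"
      by (rule integrable_bcontfun_mult[OF assms(2) integrable_dx_pf(1)[OF assms(4)]])
    show "integrable lborel (\<lambda>x. a' x * (p x * f x t))"
      using integrable_moment[OF assms(4) bcontfun_mult_p[OF assms(3)]] by (simp add: mult.assoc)
    show "((\<lambda>x. a x * (p x * f x t)) \<longlongrightarrow> 0) at_top" "((\<lambda>x. a x * (p x * f x t)) \<longlongrightarrow> 0) at_bot"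
      using tendsto_bcontfun_mult_zero[OF bcontfun_mult_p[OF assms(2)]]
        f_vanishing_at_infinity[OF assms(4)]
      by (simp_all add: mult.assoc)
  qed
  then show ?thesis
    unfolding moment_def by (simp add: mult.assoc)
qed

lemma integral_mult_dxx_pf:
  assumes "\<And>x. (\<phi> has_real_derivative \<phi>1 x) (at x)" "\<And>x. (\<phi>1 has_real_derivative \<phi>2 x) (at x)"
    and "\<phi> \<in> bcontfun" "\<phi>1 \<in> bcontfun" "\<phi>2 \<in> bcontfun" "t \<in> {0..T}"
  shows "(LINT x|lborel. \<phi> x * dxx_pf t x) = moment (\<lambda>x. \<phi>2 x * p x) t"
proof -
  have "(LINT x|lborel. \<phi> x * dxx_pf t x) = - (LINT x|lborel. \<phi>1 x * dx_pf t x)"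
  proof (rule integral_by_parts_vanishing_at_infinity[OF assms(1)])
    show "(dx_pf t has_real_derivative dxx_pf t x) (at x)" for x
      unfolding dx_pf_def dxx_pf_def
      by (rule derivative_eq_intros p_has_real_derivative f_has_space_derivatives[OF assms(6)] refl
          | simp add: algebra_simps)+
    show "integrable lborel (\<lambda>x. \<phi> x * dxx_pf t x)" "integrable lborel (\<lambda>x. \<phi>1 x * dx_pf t x)"
      using assms(3,4) integrable_dx_pf[OF assms(6)] by (auto intro: integrable_bcontfun_mult)
    have "((\<lambda>x. \<phi> x * dx_pf t x) \<longlongrightarrow> 0) F"
      if "((\<lambda>x. f x t) \<longlongrightarrow> 0) F" "((\<lambda>x. fx x t) \<longlongrightarrow> 0) F" for F
      using tendsto_add[OF tendsto_bcontfun_mult_zero[OF bcontfun_mult_p1[OF assms(3)] that(1)]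
          tendsto_bcontfun_mult_zero[OF bcontfun_mult_p[OF assms(3)] that(2)]]
      by (simp add: dx_pf_def algebra_simps)
    then show "((\<lambda>x. \<phi> x * dx_pf t x) \<longlongrightarrow> 0) at_top" "((\<lambda>x. \<phi> x * dx_pf t x) \<longlongrightarrow> 0) at_bot"
      using f_vanishing_at_infinity[OF assms(6)] by auto
  qed
  then show ?thesis
    using integral_mult_dx_pf[OF assms(2,4,5,6)] by simp
qed

lemma moment_has_derivative:
  assumes \<phi>: "\<And>x. (\<phi> has_real_derivative \<phi>1 x) (at x)" "\<And>x. (\<phi>1 has_real_derivative \<phi>2 x) (at x)"
    and bcont: "\<phi> \<in> bcontfun" "\<phi>1 \<in> bcontfun" "\<phi>2 \<in> bcontfun"
    and t: "t \<in> {0..T}"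
  shows "(moment \<phi> has_real_derivative
            drift t * moment (\<lambda>x. \<phi>1 x * p x) t + diffusion t * moment (\<lambda>x. \<phi>2 x * p x) t)
           (at t within {0..T})"
proof -
  have "(LINT x|lborel. \<phi> x * ft x t)
          = (LINT x|lborel. - drift t * (\<phi> x * dx_pf t x) + diffusion t * (\<phi> x * dxx_pf t x))"
    by (simp add: ft_eq[OF t] algebra_simps)
  also have "\<dots> = - drift t * (LINT x|lborel. \<phi> x * dx_pf t x)
                    + diffusion t * (LINT x|lborel. \<phi> x * dxx_pf t x)"
    using integrable_bcontfun_mult[OF bcont(1) integrable_dx_pf(1)[OF t]]
      integrable_bcontfun_mult[OF bcont(1) integrable_dx_pf(2)[OF t]]
    by simp
  also have "\<dots> = drift t * moment (\<lambda>x. \<phi>1 x * p x) t + diffusion t * moment (\<lambda>x. \<phi>2 x * p x) t"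
    using integral_mult_dx_pf[OF \<phi>(1) bcont(1,2) t] integral_mult_dxx_pf[OF \<phi> bcont t] by simp
  finally show ?thesis
    using moment_has_derivative_integral_ft[OF bcont(1) t] by simp
qed

lemma moment_nonneg: "t \<in> {0..T} \<Longrightarrow> (\<And>x. 0 \<le> \<phi> x) \<Longrightarrow> 0 \<le> moment \<phi> t"
  unfolding moment_def by (intro Bochner_Integration.integral_nonneg mult_nonneg_nonneg f_nonneg)

lemma moment_abs_le:
  assumes "t \<in> {0..T}" "\<phi> \<in> bcontfun" "\<psi> \<in> bcontfun" "\<And>x. \<bar>\<phi> x\<bar> \<le> \<psi> x"
  shows "\<bar>moment \<phi> t\<bar> \<le> moment \<psi> t"
  unfolding moment_def
proof (rule integral_abs_bound_integral)
  show "\<bar>\<phi> x * f x t\<bar> \<le> \<psi> x * f x t" for x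
    using assms(4)[of x] f_nonneg[OF assms(1), of x] by (simp add: abs_mult mult_right_mono)
qed (use assms integrable_moment in auto)

lemma mass_conserved:
  assumes "t \<in> {0..T}"
  shows "moment (\<lambda>_. 1) t = 1"
proof -
  have "(moment (\<lambda>_. 1) has_real_derivative 0) (at s within {0..T})" if "s \<in> {0..T}" for s
    using moment_has_derivative[of "\<lambda>_. 1" "\<lambda>_. 0" "\<lambda>_. 0", OF _ _ _ _ _ that]
    by (simp add: const_bcontfun moment_def)
  then obtain c where "\<forall>s\<in>{0..T}. moment (\<lambda>_. 1) s = c"
    using has_field_derivative_zero_constant[of "{0..T}" "moment (\<lambda>_. 1)"] by auto
  with assms T initial_mass show ?thesis
    unfolding moment_def by auto
qed

lemma moment_abs_le_1:
  assumes "t \<in> {0..T}" "\<phi> \<in> bcontfun" "\<And>x. \<bar>\<phi> x\<bar> \<le> 1"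
  shows "\<bar>moment \<phi> t\<bar> \<le> 1"
  using moment_abs_le[OF assms(1,2) const_bcontfun assms(3)] mass_conserved[OF assms(1)] by simp

lemma coef_a_abs_le: "t \<in> {0..T} \<Longrightarrow> \<bar>coef_a \<kappa> p f t\<bar> \<le> 1"
  unfolding coef_a_def moment_def[symmetric]
proof (rule moment_abs_le_1)
  show "\<bar>\<kappa> - p x\<bar> \<le> 1" for x using p_bounds(1,2)[of x] \<kappa> by auto
qed (auto intro: minus_cont[OF const_bcontfun p_bcontfun(1)])

lemma coef_b_bounds: "t \<in> {0..T} \<Longrightarrow> 0 \<le> coef_b p f t \<and> coef_b p f t \<le> 1"
proof -
  assume t: "t \<in> {0..T}"
  have "\<bar>p x\<bar> \<le> 1" "\<bar>1 - p x\<bar> \<le> 1" for x using p_bounds(1,2)[of x] by auto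
  then have "\<bar>moment p t\<bar> \<le> 1" "\<bar>moment (\<lambda>x. 1 - p x) t\<bar> \<le> 1"
    by (auto intro!: moment_abs_le_1[OF t] minus_cont[OF const_bcontfun p_bcontfun(1)] p_bcontfun)
  moreover have "0 \<le> moment p t" "0 \<le> moment (\<lambda>x. 1 - p x) t"
    using moment_nonneg[OF t] p_bounds by (auto simp: less_imp_le)
  ultimately show ?thesis
    unfolding coef_b_def moment_def[symmetric] by (simp add: mult_le_one)
qed

lemma drift_abs_le: "t \<in> {0..T} \<Longrightarrow> \<bar>drift t\<bar> \<le> (M - 1) / sqrt \<tau>"
proof -
  assume t: "t \<in> {0..T}"
  have "\<bar>drift t\<bar> = (M - 1) / sqrt \<tau> * \<bar>coef_a \<kappa> p f t\<bar>"
    using M \<tau> unfolding drift_def by (simp add: abs_mult)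
  also have "\<dots> \<le> (M - 1) / sqrt \<tau> * 1"
    using coef_a_abs_le[OF t] M \<tau> by (intro mult_left_mono) auto
  finally show ?thesis by simp
qed

lemma diffusion_bounds: "t \<in> {0..T} \<Longrightarrow> 0 \<le> diffusion t \<and> diffusion t \<le> M * (M - 1) / 2"
proof -
  assume t: "t \<in> {0..T}"
  have "(coef_a \<kappa> p f t)\<^sup>2 \<le> 1"
    using coef_a_abs_le[OF t] by (simp add: abs_square_le_1)
  moreover have "0 \<le> coef_b p f t / (M - 1)" "coef_b p f t / (M - 1) \<le> 1 / (M - 1)"
    using coef_b_bounds[OF t] M by (auto intro: divide_right_mono)
  ultimately have "0 \<le> diffusion t" "diffusion t \<le> (M - 1)\<^sup>2 / 2 * (1 + 1 / (M - 1))"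
    unfolding diffusion_def using M by (auto intro!: mult_left_mono)
  moreover have "(M - 1)\<^sup>2 / 2 * (1 + 1 / (M - 1)) = M * (M - 1) / 2"
    using M by (simp add: field_simps power2_eq_square)
  ultimately show ?thesis by simp
qed

lemma moment_derivative_bound:
  assumes \<phi>: "\<And>x. (\<phi> has_real_derivative \<phi>1 x) (at x)" "\<And>x. (\<phi>1 has_real_derivative \<phi>2 x) (at x)"
    and bcont: "\<phi> \<in> bcontfun" "\<phi>1 \<in> bcontfun" "\<phi>2 \<in> bcontfun"
    and bound: "\<And>x. \<bar>\<phi>1 x\<bar> \<le> K * (1 - p x)" "\<And>x. \<bar>\<phi>2 x\<bar> \<le> K * (1 - p x)"
    and t: "t \<in> {0..T}"
  shows "\<exists>V. (moment \<phi> has_real_derivative V) (at t within {0..T}) \<and>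
           \<bar>V\<bar> \<le> ((M - 1) / sqrt \<tau> + M * (M - 1) / 2) * K * moment (\<lambda>x. (1 - p x) * p x) t"
proof -
  let ?\<beta> = "moment (\<lambda>x. (1 - p x) * p x) t"
  have weighted: "\<bar>moment (\<lambda>x. a x * p x) t\<bar> \<le> K * ?\<beta>"
    if "a \<in> bcontfun" "\<And>x. \<bar>a x\<bar> \<le> K * (1 - p x)" for a
  proof -
    have "\<bar>moment (\<lambda>x. a x * p x) t\<bar> \<le> moment (\<lambda>x. K * ((1 - p x) * p x)) t"
    proof (rule moment_abs_le[OF t])
      show "\<bar>a x * p x\<bar> \<le> K * ((1 - p x) * p x)" for x
        using that(2)[of x] p_bounds[of x] by (simp add: abs_mult mult_right_mono mult.assoc)
    qed (use that(1) p_bcontfun in \<open>auto intro!: mult_cont minus_cont const_bcontfun\<close>)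
    also have "\<dots> = K * ?\<beta>"
      unfolding moment_def by (simp add: mult.assoc)
    finally show ?thesis .
  qed
  let ?V = "drift t * moment (\<lambda>x. \<phi>1 x * p x) t + diffusion t * moment (\<lambda>x. \<phi>2 x * p x) t"
  have "\<bar>?V\<bar> \<le> \<bar>drift t\<bar> * \<bar>moment (\<lambda>x. \<phi>1 x * p x) t\<bar> + \<bar>diffusion t\<bar> * \<bar>moment (\<lambda>x. \<phi>2 x * p x) t\<bar>"
    by (simp add: abs_mult[symmetric] abs_triangle_ineq)
  also have "\<dots> \<le> (M - 1) / sqrt \<tau> * (K * ?\<beta>) + M * (M - 1) / 2 * (K * ?\<beta>)"
    using drift_abs_le[OF t] diffusion_bounds[OF t] weighted[OF bcont(2) bound(1)] weighted[OF bcont(3) bound(2)]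
    by (intro add_mono mult_mono) auto
  finally show ?thesis
    using moment_has_derivative[OF \<phi> bcont t] by (auto simp: algebra_simps)
qed

abbreviation \<alpha> :: "real \<Rightarrow> real" where
  "\<alpha> \<equiv> moment p"

abbreviation \<beta> :: "real \<Rightarrow> real" where
  "\<beta> \<equiv> moment (\<lambda>x. (1 - p x) * p x)"

lemma alpha_derivative_bound:
  assumes "t \<in> {0..T}"
  shows "\<exists>V. (\<alpha> has_real_derivative V) (at t within {0..T}) \<and> \<bar>V\<bar> \<le> decay_rate M \<tau> cp * \<beta> t"
proof -
  have "cp * (1 - p x) \<le> (cp + 2 * cp\<^sup>2) * (1 - p x)" for x
    using p_bounds(2)[of x] by (intro mult_right_mono) auto
  then have "\<bar>p1 x\<bar> \<le> (cp + 2 * cp\<^sup>2) * (1 - p x)" "\<bar>p2 x\<bar> \<le> (cp + 2 * cp\<^sup>2) * (1 - p x)" for x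
    using p_bounds(3-5)[of x] by (auto intro: order_trans)
  from moment_derivative_bound[OF p_has_real_derivative p_bcontfun this assms]
  show ?thesis unfolding decay_rate_def .
qed

lemma beta_derivative_bound:
  assumes "t \<in> {0..T}"
  shows "\<exists>V. (\<beta> has_real_derivative V) (at t within {0..T}) \<and> \<bar>V\<bar> \<le> decay_rate M \<tau> cp * \<beta> t"
proof -
  have deriv: "((\<lambda>x. (1 - p x) * p x) has_real_derivative p1 x * (1 - 2 * p x)) (at x)"
    "((\<lambda>x. p1 x * (1 - 2 * p x)) has_real_derivative p2 x * (1 - 2 * p x) - 2 * (p1 x)\<^sup>2) (at x)"
    for x
    by (rule derivative_eq_intros p_has_real_derivative refl
        | simp add: algebra_simps power2_eq_square)+
  have bcont: "(\<lambda>x. (1 - p x) * p x) \<in> bcontfun" "(\<lambda>x. p1 x * (1 - 2 * p x)) \<in> bcontfun"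
    "(\<lambda>x. p2 x * (1 - 2 * p x) - 2 * (p1 x)\<^sup>2) \<in> bcontfun"
    unfolding power2_eq_square
    by (intro mult_cont minus_cont const_bcontfun p_bcontfun)+
  have bound: "\<bar>p1 x * (1 - 2 * p x)\<bar> \<le> (cp + 2 * cp\<^sup>2) * (1 - p x)"
    "\<bar>p2 x * (1 - 2 * p x) - 2 * (p1 x)\<^sup>2\<bar> \<le> (cp + 2 * cp\<^sup>2) * (1 - p x)" for x
  proof -
    have "\<bar>p1 x\<bar> \<le> cp * (1 - p x)" using p_bounds(3,4)[of x] by simp
    from derivative_bounds_one_minus_p_times_p[OF less_imp_le[OF p_bounds(1)] p_bounds(2) this p_bounds(5)]
    show "\<bar>p1 x * (1 - 2 * p x)\<bar> \<le> (cp + 2 * cp\<^sup>2) * (1 - p x)"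
      "\<bar>p2 x * (1 - 2 * p x) - 2 * (p1 x)\<^sup>2\<bar> \<le> (cp + 2 * cp\<^sup>2) * (1 - p x)" .
  qed
  from moment_derivative_bound[OF deriv bcont bound assms]
  show ?thesis unfolding decay_rate_def .
qed

lemma beta_exp_lower_bound:
  assumes "t \<in> {0..T}"
  shows "\<beta> 0 * exp (- decay_rate M \<tau> cp * t) \<le> \<beta> t"
proof -
  have "\<forall>s\<in>{0..T}. \<exists>V. (\<beta> has_real_derivative V) (at s within {0..T}) \<and>
      \<bar>V\<bar> \<le> decay_rate M \<tau> cp * \<beta> s"
    using beta_derivative_bound by blast
  from bchoice[OF this] obtain \<beta>' where \<beta>': "\<And>s. s \<in> {0..T} \<Longrightarrow>
      (\<beta> has_real_derivative \<beta>' s) (at s within {0..T}) \<and> \<bar>\<beta>' s\<bar> \<le> decay_rate M \<tau> cp * \<beta> s"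
    by blast
  have "continuous_on {0..T} \<beta>"
    using \<beta>' by (intro DERIV_continuous_on) blast
  then have "continuous_on {0..t} \<beta>"
    by (rule continuous_on_subset) (use assms in auto)
  moreover have "(\<beta> has_real_derivative \<beta>' s) (at s)" if "0 < s" "s < t" for s
    using \<beta>'[of s] that assms at_within_Icc_at[of 0 s T] by auto
  moreover have "- decay_rate M \<tau> cp * \<beta> s \<le> \<beta>' s" if "0 < s" "s < t" for s
    using \<beta>'[of s] that assms by auto
  ultimately show ?thesis
    using exp_lower_bound_if_deriv_ge[of 0 t \<beta> \<beta>' "decay_rate M \<tau> cp"] assms by simp
qed

end

theorem lemma4p2:
  fixes M \<tau> cp :: real
  assumes "M > 1" and "\<tau> > 0" and "cp > 0"
  shows "\<exists>c0. \<forall>(\<kappa>::real) (T::real) (pmin::real) p p1 p2 f0 f ft fx fxx.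
     0 < \<kappa> \<and> \<kappa> < 1 \<and> T > 0 \<and>
     admissible_p cp pmin p p1 p2 \<and> admissible_f0 p f0 \<and>
     regular_sol T f ft fx fxx \<and> solves_pde M \<tau> \<kappa> T p p1 p2 f ft fx fxx \<and>
     (\<forall>t\<in>{0..T}. \<forall>x. 0 \<le> f x t) \<and> (\<forall>x. f x 0 = f0 x)
     \<longrightarrow>
     (let \<alpha> = (\<lambda>t. LINT x|lborel. p x * f x t);
          \<beta> = (\<lambda>t. LINT x|lborel. (1 - p x) * p x * f x t)
      in (\<forall>t\<in>{0<..<T}. \<alpha> differentiable (at t) \<and> \<beta> differentiable (at t) \<and>
                         \<bar>deriv \<alpha> t\<bar> \<le> c0 * \<beta> t \<and> \<bar>deriv \<beta> t\<bar> \<le> c0 * \<beta> t) \<and>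
         (\<forall>t\<in>{0<..T}. \<beta> t \<ge> \<beta> 0 * exp (- c0 * t)))"
proof (rule exI[where x = "decay_rate M \<tau> cp"], intro allI impI, elim conjE, goal_cases)
  case (1 \<kappa> T pmin p p1 p2 f0 f ft fx fxx)
  then interpret pde_solution M \<tau> \<kappa> T cp pmin p p1 p2 f ft fx fxx
    using assms by unfold_locales (auto simp: admissible_f0_def)
  have "(\<lambda>t. LINT x|lborel. p x * f x t) = \<alpha>" "(\<lambda>t. LINT x|lborel. (1 - p x) * p x * f x t) = \<beta>"
    unfolding moment_def by simp_all
  then show ?case
    using differentiable_deriv_bound_interior[OF alpha_derivative_bound]
      differentiable_deriv_bound_interior[OF beta_derivative_bound] beta_exp_lower_bound
    by (simp add: Let_def)
qed

end
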